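(* Let $S$ be an infinite set and $\mathcal{F}\subseteq 2^S$ a family closed under finite unions (i.e. $A\cup B\in\mathcal{F}$ whenever $A,B\in\mathcal{F}$). Then for all classification problems $\mathbf{A}$ and $\mathbf{B}$ with $\mathbf{B}\leq\mathbf{A}$: if $\mathbf{A}\in \mathit{class}_{|\mathbf{A}|}(\mathcal{F})$, then $\mathbf{B}\in \mathit{class}_{|\mathbf{B}|}(\mathcal{F})$.
   Context: A vector $\mathbf{A}=(A_1,\dots,A_k)$ ($k\ge 1$) of subsets of $S$ has length $|\mathbf{A}|=k$. For vectors $\mathbf{B}=(B_1,\dots,B_m)$ and $\mathbf{A}=(A_1,\dots,A_k)$, $\mathbf{B}\leq\mathbf{A}$ means $1\le m\le k$ and there is an injective $\sigma:\{1,\dots,m\}\to\{1,\dots,k\}$ with $B_i\subseteq A_{\sigma(i)}$ for all $i$. A classification problem is a vector $(A_1,\dots,A_k)$, $k\ge1$, of pairwise disjoint infinite subsets of $S$. An $\mathcal{F}$-partition is a vector $(Q_1,\dots,Q_k)$ of pairwise disjoint sets $Q_i\in\mathcal{F}$ with $Q_1\cup\dots\cup Q_k=S$. $\mathit{class}_k(\mathcal{F})$ is the set of classification problems $\mathbf{A}$ with $|\mathbf{A}|=k$ for which an $\mathcal{F}$-partition $\mathbf{Q}$ with $|\mathbf{Q}|=k$ and $\mathbf{A}\leq\mathbf{Q}$ exists. *)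

theory Defs
  imports Main
begin

text \<open>Vectors (A_1,...,A_k) of subsets of S are represented as lists of sets, indexed from 0.\<close>

definition vec_le :: "'a set list \<Rightarrow> 'a set list \<Rightarrow> bool" where
  "vec_le B A \<longleftrightarrow> 1 \<le> length B \<and> length B \<le> length A \<and>
     (\<exists>\<sigma>::nat \<Rightarrow> nat. inj_on \<sigma> {..<length B} \<and> \<sigma> ` {..<length B} \<subseteq> {..<length A} \<and>
        (\<forall>i<length B. B ! i \<subseteq> A ! (\<sigma> i)))"

definition classification_problem :: "'a set \<Rightarrow> 'a set list \<Rightarrow> bool" where
  "classification_problem S A \<longleftrightarrow> 1 \<le> length A \<and>
     (\<forall>i<length A. A ! i \<subseteq> S \<and> infinite (A ! i)) \<and>
     (\<forall>i<length A. \<forall>j<length A. i \<noteq> j \<longrightarrow> A ! i \<inter> A ! j = {})"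

definition F_partition :: "'a set \<Rightarrow> 'a set set \<Rightarrow> 'a set list \<Rightarrow> bool" where
  "F_partition S F Q \<longleftrightarrow> 1 \<le> length Q \<and>
     (\<forall>i<length Q. Q ! i \<in> F) \<and>
     (\<forall>i<length Q. \<forall>j<length Q. i \<noteq> j \<longrightarrow> Q ! i \<inter> Q ! j = {}) \<and>
     \<Union> (set Q) = S"

definition class_k :: "'a set \<Rightarrow> 'a set set \<Rightarrow> nat \<Rightarrow> 'a set list set" where
  "class_k S F k = {A. classification_problem S A \<and> length A = k \<and>
     (\<exists>Q. F_partition S F Q \<and> length Q = k \<and> vec_le A Q)}"

end

theory Submission
  imports Defs
begin

text \<open>Compose the embeddings to get B \<le> Q for an F-partition Q of length |A|. Then label every
  block of Q by the index of the entry of B it receives, and send the blocks receiving nothing to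
  an arbitrary label. Merging the blocks with equal labels is again an F-partition, since F is
  closed under finite unions, and it has exactly |B| blocks, the i-th one containing B_i.\<close>

lemma vec_le_trans:
  assumes "vec_le C B" and "vec_le B A"
  shows "vec_le C A"
proof -
  obtain \<tau> where \<tau>: "inj_on \<tau> {..<length C}" "\<tau> ` {..<length C} \<subseteq> {..<length B}"
    "\<forall>i<length C. C ! i \<subseteq> B ! \<tau> i"
    using assms(1) unfolding vec_le_def by blast
  obtain \<sigma> where \<sigma>: "inj_on \<sigma> {..<length B}" "\<sigma> ` {..<length B} \<subseteq> {..<length A}"
    "\<forall>i<length B. B ! i \<subseteq> A ! \<sigma> i"
    using assms(2) unfolding vec_le_def by blast
  have "inj_on (\<sigma> \<circ> \<tau>) {..<length C}"
    using comp_inj_on[OF \<tau>(1) inj_on_subset[OF \<sigma>(1) \<tau>(2)]] .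
  moreover have "(\<sigma> \<circ> \<tau>) ` {..<length C} \<subseteq> {..<length A}"
    using \<tau>(2) \<sigma>(2) by (auto simp: image_subset_iff)
  moreover have "\<forall>i<length C. C ! i \<subseteq> A ! (\<sigma> \<circ> \<tau>) i"
    using \<tau>(2,3) \<sigma>(3) by (fastforce simp: image_subset_iff)
  ultimately show ?thesis
    using assms unfolding vec_le_def by (meson order_trans)
qed

lemma Union_in_union_closed:
  assumes "\<And>X Y. X \<in> F \<Longrightarrow> Y \<in> F \<Longrightarrow> X \<union> Y \<in> F"
    and "finite T" "T \<noteq> {}" "T \<subseteq> F"
  shows "\<Union> T \<in> F"
  using assms(2-4) by (induction T rule: finite_ne_induct) (simp_all add: assms(1))

definition merge_blocks :: "'a set list \<Rightarrow> (nat \<Rightarrow> nat) \<Rightarrow> nat \<Rightarrow> 'a set list" where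
  "merge_blocks Q g m = map (\<lambda>j. \<Union> {Q ! i | i. i < length Q \<and> g i = j}) [0..<m]"

lemma length_merge_blocks [simp]: "length (merge_blocks Q g m) = m"
  by (simp add: merge_blocks_def)

lemma nth_merge_blocks:
  "j < m \<Longrightarrow> merge_blocks Q g m ! j = \<Union> {Q ! i | i. i < length Q \<and> g i = j}"
  by (simp add: merge_blocks_def)

lemma nth_subset_merge_blocks:
  "i < length Q \<Longrightarrow> g i < m \<Longrightarrow> Q ! i \<subseteq> merge_blocks Q g m ! g i"
  by (auto simp: nth_merge_blocks)

lemma F_partition_merge_blocks:
  assumes Q: "F_partition S F Q"
    and union_closed: "\<And>X Y. X \<in> F \<Longrightarrow> Y \<in> F \<Longrightarrow> X \<union> Y \<in> F"
    and "1 \<le> m"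
    and g_into: "\<And>i. i < length Q \<Longrightarrow> g i < m"
    and g_onto: "\<And>j. j < m \<Longrightarrow> \<exists>i<length Q. g i = j"
  shows "F_partition S F (merge_blocks Q g m)"
proof -
  have Q_F: "\<And>i. i < length Q \<Longrightarrow> Q ! i \<in> F"
    and Q_disj: "\<And>i i'. i < length Q \<Longrightarrow> i' < length Q \<Longrightarrow> i \<noteq> i' \<Longrightarrow> Q ! i \<inter> Q ! i' = {}"
    and Q_cover: "\<Union> (set Q) = S"
    using Q unfolding F_partition_def by blast+
  show ?thesis
    unfolding F_partition_def
  proof (intro conjI allI impI)
    show "1 \<le> length (merge_blocks Q g m)"
      using \<open>1 \<le> m\<close> by simp
    fix j assume j: "j < length (merge_blocks Q g m)"
    have "\<Union> {Q ! i | i. i < length Q \<and> g i = j} \<in> F"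
    proof (rule Union_in_union_closed[OF union_closed])
      show "finite {Q ! i | i. i < length Q \<and> g i = j}"
        by simp
      show "{Q ! i | i. i < length Q \<and> g i = j} \<noteq> {}"
        using g_onto[of j] j by auto
    qed (auto intro: Q_F)
    then show "merge_blocks Q g m ! j \<in> F"
      using j by (simp add: nth_merge_blocks)
    fix j' assume "j' < length (merge_blocks Q g m)" and "j \<noteq> j'"
    then show "merge_blocks Q g m ! j \<inter> merge_blocks Q g m ! j' = {}"
      using j Q_disj by (fastforce simp: nth_merge_blocks)
  next
    show "\<Union> (set (merge_blocks Q g m)) = S"
      using Q_cover g_into by (fastforce simp: merge_blocks_def in_set_conv_nth)
  qed
qed

theorem proposition2p2:
  fixes S :: "'a set" and F :: "'a set set"
  assumes "infinite S"
    and "F \<subseteq> Pow S"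
    and "\<And>X Y. X \<in> F \<Longrightarrow> Y \<in> F \<Longrightarrow> X \<union> Y \<in> F"
  shows "\<forall>A B. classification_problem S A \<and> classification_problem S B \<and> vec_le B A
           \<longrightarrow> A \<in> class_k S F (length A) \<longrightarrow> B \<in> class_k S F (length B)"
proof (intro allI impI)
  fix A B :: "'a set list"
  assume B: "classification_problem S A \<and> classification_problem S B \<and> vec_le B A"
    and "A \<in> class_k S F (length A)"
  then obtain Q where Q: "F_partition S F Q" and "vec_le A Q"
    unfolding class_k_def by blast
  with B have "vec_le B Q"
    by (blast intro: vec_le_trans)
  then obtain \<rho> where \<rho>: "inj_on \<rho> {..<length B}" "\<rho> ` {..<length B} \<subseteq> {..<length Q}"
    "\<forall>i<length B. B ! i \<subseteq> Q ! \<rho> i" and "1 \<le> length B"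
    unfolding vec_le_def by blast
  define g where "g i = (if i \<in> \<rho> ` {..<length B} then the_inv_into {..<length B} \<rho> i
    else length B - 1)" for i
  have g_\<rho>: "g (\<rho> j) = j" if "j < length B" for j
    using that \<rho>(1) by (simp add: g_def the_inv_into_f_f)
  have g_into: "g i < length B" for i
    using \<rho>(1) \<open>1 \<le> length B\<close> by (auto simp: g_def the_inv_into_f_f)
  define Q' where "Q' = merge_blocks Q g (length B)"
  have "F_partition S F Q'"
    unfolding Q'_def using \<rho>(2) g_\<rho>
    by (intro F_partition_merge_blocks[OF Q assms(3) \<open>1 \<le> length B\<close> g_into]) auto
  moreover have "\<forall>i<length B. B ! i \<subseteq> Q' ! i"
    using \<rho> nth_subset_merge_blocks[of _ Q g] g_\<rho> g_into unfolding Q'_def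
    by (metis image_subset_iff lessThan_iff subset_trans)
  then have "vec_le B Q'"
    unfolding vec_le_def using \<open>1 \<le> length B\<close>
    by (intro conjI exI[of _ id]) (simp_all add: Q'_def)
  ultimately show "B \<in> class_k S F (length B)"
    using B unfolding class_k_def Q'_def by auto
qed

end
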